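(* Let $\Delta\in\mathcal{H}_{\ge 3}$ be a hypergraph on $[d]$ and let $F$ be a finite set of atoms of the form $(c_1\not\sim c_2)$ with $c_1\ne c_2\in[d]$. Then there exists a unique hypergraph $\Delta_F$ on $[d]$ that is minimal (with respect to $\le$) among the hypergraphs $\widetilde\Delta$ satisfying: (1) $\Delta\le\widetilde\Delta$; (2) there is no atom $(c_1\not\sim c_2)$ in $F$ and no pair of distinct edges $e_1,e_2\in\widetilde\Delta$ with $\{c_1,c_2\}\subseteq e_1\cap e_2$.
   Context: A hypergraph on the vertex set $[d]$ is a collection $\Delta$ of subsets of $[d]$ (edges) such that no edge is a proper subset of another edge. For hypergraphs $\Delta_1,\Delta_2$, $\Delta_1\le\Delta_2$ means that every edge of $\Delta_1$ is contained in some edge of $\Delta_2$. $\mathcal{H}_{\ge3}$ is the set of hypergraphs all of whose edges have size at least $3$. *)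

theory Defs
  imports Main
begin

definition hypergraph :: "nat \<Rightarrow> nat set set \<Rightarrow> bool" where
  "hypergraph d \<Delta> \<longleftrightarrow>
     (\<forall>e\<in>\<Delta>. e \<subseteq> {1..d}) \<and> (\<forall>e1\<in>\<Delta>. \<forall>e2\<in>\<Delta>. \<not> (e1 \<subset> e2))"

definition hg_le :: "nat set set \<Rightarrow> nat set set \<Rightarrow> bool" where
  "hg_le \<Delta>1 \<Delta>2 \<longleftrightarrow> (\<forall>e1\<in>\<Delta>1. \<exists>e2\<in>\<Delta>2. e1 \<subseteq> e2)"

definition edges_ge3 :: "nat set set \<Rightarrow> bool" where
  "edges_ge3 \<Delta> \<longleftrightarrow> (\<forall>e\<in>\<Delta>. 3 \<le> card e)"

text \<open>An atom (c1 \<noteq>~ c2) is represented by the pair (c1, c2).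
  Condition (2): no atom of F has both vertices in the intersection of two distinct edges.\<close>
definition respects_atoms :: "(nat \<times> nat) set \<Rightarrow> nat set set \<Rightarrow> bool" where
  "respects_atoms F \<Delta>' \<longleftrightarrow>
     \<not> (\<exists>(c1, c2)\<in>F. \<exists>e1\<in>\<Delta>'. \<exists>e2\<in>\<Delta>'. e1 \<noteq> e2 \<and> {c1, c2} \<subseteq> e1 \<inter> e2)"

definition admissible :: "nat \<Rightarrow> nat set set \<Rightarrow> (nat \<times> nat) set \<Rightarrow> nat set set \<Rightarrow> bool" where
  "admissible d \<Delta> F \<Delta>' \<longleftrightarrow> hypergraph d \<Delta>' \<and> hg_le \<Delta> \<Delta>' \<and> respects_atoms F \<Delta>'"

definition minimal_admissible :: "nat \<Rightarrow> nat set set \<Rightarrow> (nat \<times> nat) set \<Rightarrow> nat set set \<Rightarrow> bool" where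
  "minimal_admissible d \<Delta> F \<Delta>F \<longleftrightarrow>
     admissible d \<Delta> F \<Delta>F \<and>
     (\<forall>\<Delta>'. admissible d \<Delta> F \<Delta>' \<and> hg_le \<Delta>' \<Delta>F \<longrightarrow> \<Delta>' = \<Delta>F)"

end

theory Submission
  imports Defs
begin

text \<open>Call a set of vertices \<^emph>\<open>forced\<close> if it lies inside an edge of every admissible
  hypergraph. Edges of \<open>\<Delta>\<close> are forced, and if two forced sets share both vertices of an atom,
  their union is forced too: in an admissible hypergraph the edges covering them cannot be
  distinct. Hence the maximal forced subsets of [d] form an admissible hypergraph, which by
  construction lies below every admissible hypergraph; being least, it is the unique minimal
  one.\<close>

lemma hypergraph_hg_le_antisym:
  assumes "hypergraph d \<Delta>1" "hypergraph d \<Delta>2" "hg_le \<Delta>1 \<Delta>2" "hg_le \<Delta>2 \<Delta>1"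
  shows "\<Delta>1 = \<Delta>2"
proof -
  have edge: "e \<in> \<Gamma>2"
    if hyp: "hypergraph d \<Gamma>1" "hg_le \<Gamma>1 \<Gamma>2" "hg_le \<Gamma>2 \<Gamma>1" "e \<in> \<Gamma>1" for \<Gamma>1 \<Gamma>2 e
  proof -
    obtain g where g: "g \<in> \<Gamma>2" "e \<subseteq> g" using hyp(2,4) unfolding hg_le_def by blast
    obtain e' where e': "e' \<in> \<Gamma>1" "g \<subseteq> e'" using hyp(3) g(1) unfolding hg_le_def by blast
    have "\<not> e \<subset> e'" using hyp(1,4) e'(1) unfolding hypergraph_def by blast
    then have "e = g" using g(2) e'(2) by blast
    with g show ?thesis by simp
  qed
  show ?thesis using edge[of \<Delta>1 \<Delta>2] edge[of \<Delta>2 \<Delta>1] assms by blast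
qed

lemma respects_atoms_iff:
  "respects_atoms F \<Delta> \<longleftrightarrow>
     (\<forall>c1 c2 e1 e2. (c1, c2) \<in> F \<longrightarrow> e1 \<in> \<Delta> \<longrightarrow> e2 \<in> \<Delta> \<longrightarrow> {c1, c2} \<subseteq> e1 \<inter> e2 \<longrightarrow> e1 = e2)"
  unfolding respects_atoms_def Bex_def split_paired_Ex prod.case by blast

definition forced :: "nat \<Rightarrow> nat set set \<Rightarrow> (nat \<times> nat) set \<Rightarrow> nat set \<Rightarrow> bool" where
  "forced d \<Delta> F A \<longleftrightarrow> (\<forall>\<Gamma>. admissible d \<Delta> F \<Gamma> \<longrightarrow> (\<exists>g\<in>\<Gamma>. A \<subseteq> g))"

definition maximal_forced :: "nat \<Rightarrow> nat set set \<Rightarrow> (nat \<times> nat) set \<Rightarrow> nat set set" where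
  "maximal_forced d \<Delta> F =
     {A. A \<subseteq> {1..d} \<and> forced d \<Delta> F A \<and>
         (\<forall>B. B \<subseteq> {1..d} \<and> forced d \<Delta> F B \<longrightarrow> \<not> A \<subset> B)}"

lemma forced_edge: "A \<in> \<Delta> \<Longrightarrow> forced d \<Delta> F A"
  unfolding forced_def admissible_def hg_le_def by blast

lemma forced_Un:
  assumes "forced d \<Delta> F A" "forced d \<Delta> F B" "(c1, c2) \<in> F" "{c1, c2} \<subseteq> A \<inter> B"
  shows "forced d \<Delta> F (A \<union> B)"
  unfolding forced_def
proof (intro allI impI)
  fix \<Gamma> assume adm: "admissible d \<Delta> F \<Gamma>"
  obtain g where g: "g \<in> \<Gamma>" "A \<subseteq> g" using assms(1) adm unfolding forced_def by blast
  obtain g' where g': "g' \<in> \<Gamma>" "B \<subseteq> g'" using assms(2) adm unfolding forced_def by blast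
  have "respects_atoms F \<Gamma>" using adm unfolding admissible_def by blast
  then have "g = g'"
    using assms(3,4) g g' unfolding respects_atoms_iff by blast
  with g g' show "\<exists>g\<in>\<Gamma>. A \<union> B \<subseteq> g" by blast
qed

lemma forced_subset_maximal_forced:
  assumes "A \<subseteq> {1..d}" "forced d \<Delta> F A"
  shows "\<exists>M\<in>maximal_forced d \<Delta> F. A \<subseteq> M"
proof -
  define S where "S = {B. B \<subseteq> {1..d} \<and> forced d \<Delta> F B}"
  have "finite S" unfolding S_def by (rule finite_subset[of _ "Pow {1..d}"]) auto
  moreover have "A \<in> S" unfolding S_def using assms by simp
  ultimately obtain M where M: "M \<in> S" "A \<subseteq> M" and max: "\<forall>B\<in>S. M \<subseteq> B \<longrightarrow> M = B"
    by (metis finite_has_maximal2)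
  have "M \<in> maximal_forced d \<Delta> F"
    unfolding maximal_forced_def mem_Collect_eq
  proof (intro conjI allI impI)
    show "M \<subseteq> {1..d}" "forced d \<Delta> F M" using M(1) unfolding S_def by simp_all
    show "\<not> M \<subset> B" if "B \<subseteq> {1..d} \<and> forced d \<Delta> F B" for B
      using that max unfolding S_def by blast
  qed
  with M(2) show ?thesis by blast
qed

lemma respects_atoms_maximal_forced: "respects_atoms F (maximal_forced d \<Delta> F)"
  unfolding respects_atoms_iff
proof (intro allI impI)
  fix c1 c2 A B
  assume cF: "(c1, c2) \<in> F" and A: "A \<in> maximal_forced d \<Delta> F"
    and B: "B \<in> maximal_forced d \<Delta> F" and c: "{c1, c2} \<subseteq> A \<inter> B"
  from A B have "forced d \<Delta> F (A \<union> B)" "A \<union> B \<subseteq> {1..d}"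
    using forced_Un[OF _ _ cF c] unfolding maximal_forced_def by auto
  then have "\<not> A \<subset> A \<union> B" "\<not> B \<subset> A \<union> B"
    using A B unfolding maximal_forced_def by blast+
  then show "A = B" by blast
qed

lemma admissible_maximal_forced:
  assumes "hypergraph d \<Delta>"
  shows "admissible d \<Delta> F (maximal_forced d \<Delta> F)"
proof -
  have "hypergraph d (maximal_forced d \<Delta> F)"
    unfolding hypergraph_def maximal_forced_def by blast
  moreover have "hg_le \<Delta> (maximal_forced d \<Delta> F)"
    unfolding hg_le_def
  proof
    fix e assume "e \<in> \<Delta>"
    with assms have "e \<subseteq> {1..d}" unfolding hypergraph_def by blast
    with \<open>e \<in> \<Delta>\<close> show "\<exists>M\<in>maximal_forced d \<Delta> F. e \<subseteq> M"
      by (intro forced_subset_maximal_forced forced_edge)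
  qed
  ultimately show ?thesis
    using respects_atoms_maximal_forced unfolding admissible_def by blast
qed

lemma maximal_forced_hg_le:
  "admissible d \<Delta> F \<Gamma> \<Longrightarrow> hg_le (maximal_forced d \<Delta> F) \<Gamma>"
  unfolding maximal_forced_def forced_def hg_le_def by blast

lemma ex1_minimal_admissible_if_least:
  assumes "admissible d \<Delta> F M" and "\<And>\<Gamma>. admissible d \<Delta> F \<Gamma> \<Longrightarrow> hg_le M \<Gamma>"
  shows "\<exists>!\<Delta>F. minimal_admissible d \<Delta> F \<Delta>F"
proof (rule ex1I[of _ M])
  show "minimal_admissible d \<Delta> F M"
    using assms hypergraph_hg_le_antisym
    unfolding minimal_admissible_def admissible_def by blast
  show "\<Delta>F = M" if "minimal_admissible d \<Delta> F \<Delta>F" for \<Delta>F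
    using that assms unfolding minimal_admissible_def by blast
qed

theorem mainTheorem3:
  fixes d :: nat and \<Delta> :: "nat set set" and F :: "(nat \<times> nat) set"
  assumes "hypergraph d \<Delta>" and "edges_ge3 \<Delta>"
    and "finite F"
    and "\<forall>(c1, c2)\<in>F. c1 \<noteq> c2 \<and> c1 \<in> {1..d} \<and> c2 \<in> {1..d}"
  shows "\<exists>!\<Delta>F. minimal_admissible d \<Delta> F \<Delta>F"
  using admissible_maximal_forced[OF assms(1)] maximal_forced_hg_le
  by (rule ex1_minimal_admissible_if_least)

end
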